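(* Let $A$ be an invertible $n\times n$ real matrix, $b\in\mathbb{R}^n$, and let $x^*=A^{-1}b$ with $i$-th component $x^*_i$. Let $Q=A^TA$, $w=A^Tb$, let $q_j$ denote the $j$-th column of $Q$, let $q_{\min}=\min\{\Vert q_j\Vert : j=1,\dots,n\}$, and let $\lambda_{\min}$ be the minimum eigenvalue of $Q$. Set $$\tau_*=\Big(\prod_{j=1}^n \Vert q_j\Vert\Big)\frac{\Vert w\Vert}{q_{\min}\,\lambda_{\min}^n},\qquad \tau'_*=\Big(\prod_{j=1}^n \Vert q_j\Vert\Big)\frac{\Vert w\Vert}{q_{\min}\,\det(Q)}.$$ Then for every $i=1,\dots,n$, $$x^*_i\geq -\tau'_*\geq -\tau_*.$$ In particular $\tau_*\geq\tau'_*\geq t_*$, where $$t_*=\min\big\{t : \text{there exists } x\in\mathbb{R}^n \text{ with } x\geq 0 \text{ and } A(x-te)=b\big\}$$ and $e=(1,\dots,1)^T\in\mathbb{R}^n$.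
   Context: $\Vert\cdot\Vert$ denotes the Euclidean norm. Inequalities between vectors ($x\geq 0$) are componentwise. *)

theory Defs
  imports "HOL-Analysis.Analysis"
begin

text \<open>Real eigenvalues of a square matrix, and the minimum eigenvalue
  (used for symmetric matrices, whose eigenvalues are all real).\<close>
definition mat_eigenvalues :: "real^'n^'n \<Rightarrow> real set" where
  "mat_eigenvalues M = {l. \<exists>v. v \<noteq> 0 \<and> M *v v = l *\<^sub>R v}"

definition min_eigenvalue :: "real^'n^'n \<Rightarrow> real" where
  "min_eigenvalue M = Min (mat_eigenvalues M)"

definition t_star :: "real^'n^'n \<Rightarrow> real^'n \<Rightarrow> real" where
  "t_star A b = Inf {t. \<exists>x::real^'n. (\<forall>i. x $ i \<ge> 0) \<and> A *v (x - t *\<^sub>R (1::real^'n)) = b}"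

end

theory Submission
  imports Defs
begin

text \<open>By Cramer's rule \<open>x\<^sup>*\<^sub>i = det Q\<^sub>i / det Q\<close>, where \<open>Q\<^sub>i\<close> is \<open>Q\<close> with its \<open>i\<close>-th column
  replaced by \<open>w\<close>, because \<open>Q x\<^sup>* = w\<close>. Hadamard's inequality bounds \<open>\<bar>det Q\<^sub>i\<bar>\<close> by
  \<open>\<parallel>w\<parallel>\<close> times the product of the remaining column norms, which is at most
  \<open>(\<Prod>\<^sub>j \<parallel>q\<^sub>j\<parallel>) / q\<^sub>m\<^sub>i\<^sub>n\<close>; this gives \<open>x\<^sup>*\<^sub>i \<ge> -\<tau>'\<^sub>*\<close>. Since \<open>det Q\<close> is the product of the
  (positive) eigenvalues of \<open>Q\<close>, \<open>\<lambda>\<^sub>m\<^sub>i\<^sub>n\<^sup>n \<le> det Q\<close> and so \<open>\<tau>'\<^sub>* \<le> \<tau>\<^sub>*\<close>. Finally \<open>x = x\<^sup>* + \<tau>'\<^sub>* e\<close>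
  witnesses \<open>\<tau>'\<^sub>*\<close> in the set defining \<open>t\<^sub>*\<close>, which is bounded below because each of its
  elements \<open>t\<close> satisfies \<open>x\<^sup>* + t e \<ge> 0\<close>.

  Both Hadamard's inequality and the eigenvalue facts rest on the spectral theorem for
  real symmetric matrices, proved here by minimising the Rayleigh quotient on invariant
  subspaces.\<close>

lemma symmetric_matrix_inner_mult:
  fixes S :: "real^'n^'n"
  assumes "transpose S = S"
  shows "x \<bullet> (S *v y) = (S *v x) \<bullet> y"
  by (metis assms dot_lmul_matrix vector_transpose_matrix)

lemma nonneg_quadratic_imp_linear_coeff_zero:
  fixes c d :: real
  assumes "\<And>t. 0 \<le> 2*t*c + t^2 * d"
  shows "c = 0"
proof (rule ccontr)
  assume c: "c \<noteq> 0"
  define k where "k = \<bar>d\<bar> + 1"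
  have k: "k > 0" "d < 2*k" by (auto simp: k_def)
  have "2*(-c/k)*c + (-c/k)^2 * d = c^2 * (d - 2*k) / k^2"
    using k by (simp add: field_simps power2_eq_square)
  moreover have "c^2 * (d - 2*k) < 0"
    using c k by (intro mult_pos_neg) auto
  ultimately have "2*(-c/k)*c + (-c/k)^2 * d < 0" using k by (simp add: divide_neg_pos)
  with assms[of "-c/k"] show False by linarith
qed

text \<open>A minimiser \<open>u\<close> of \<open>x \<bullet> S x\<close> on the unit sphere of \<open>V\<close> is an eigenvector: perturbing
  \<open>u\<close> in a direction \<open>v \<bottom> u\<close> shows that the first-order term \<open>v \<bullet> S u\<close> vanishes.\<close>

lemma symmetric_matrix_eigenvector_in_invariant_subspace:
  fixes S :: "real^'n^'n"
  assumes sym: "transpose S = S" and V: "subspace V" "V \<noteq> {0}"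
    and inv: "\<And>x. x \<in> V \<Longrightarrow> S *v x \<in> V"
  obtains u l where "u \<in> V" "norm u = 1" "S *v u = l *\<^sub>R u"
proof -
  define K where "K = V \<inter> sphere 0 1"
  have "compact K" unfolding K_def
    using V(1) by (intro closed_Int_compact) (auto simp: closed_subspace)
  obtain z where z: "z \<in> V" "z \<noteq> 0" using V subspace_0 by blast
  have "z /\<^sub>R norm z \<in> K" using z V(1) by (auto simp: K_def subspace_scale)
  hence "K \<noteq> {}" by blast
  have "continuous_on K (\<lambda>x. x \<bullet> (S *v x))"
    by (intro continuous_intros linear_continuous_on matrix_vector_mul_bounded_linear)
  then obtain u where u: "u \<in> K" and umin: "\<And>y. y \<in> K \<Longrightarrow> u \<bullet> (S *v u) \<le> y \<bullet> (S *v y)"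
    using continuous_attains_inf[OF \<open>compact K\<close> \<open>K \<noteq> {}\<close>] by blast
  define l where "l = u \<bullet> (S *v u)"
  have uV: "u \<in> V" and nu: "norm u = 1" using u by (auto simp: K_def)
  have uu: "u \<bullet> u = 1" using nu by (simp add: norm_eq_1)
  have first_order: "v \<bullet> (S *v u) = 0" if vV: "v \<in> V" and vu: "u \<bullet> v = 0" for v
  proof (rule nonneg_quadratic_imp_linear_coeff_zero)
    fix t :: real
    define y where "y = u + t *\<^sub>R v"
    have yy: "y \<bullet> y = 1 + t^2 * (v \<bullet> v)"
      unfolding y_def using uu vu by (simp add: algebra_simps inner_commute power2_eq_square)
    hence ypos: "y \<bullet> y > 0" by (simp add: add_pos_nonneg)
    hence "norm y > 0" by (metis inner_gt_zero_iff zero_less_norm_iff)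
    have "y \<in> V" unfolding y_def using uV vV V(1) by (simp add: subspace_add subspace_scale)
    hence "y /\<^sub>R norm y \<in> K" using \<open>norm y > 0\<close> V(1) by (auto simp: K_def subspace_scale)
    hence "l \<le> (y /\<^sub>R norm y) \<bullet> (S *v (y /\<^sub>R norm y))" using umin l_def by blast
    also have "\<dots> = (y \<bullet> (S *v y)) / (y \<bullet> y)"
      using \<open>norm y > 0\<close>
      by (simp add: matrix_vector_mult_scaleR power2_norm_eq_inner[symmetric] power2_eq_square field_simps)
    finally have "l * (y \<bullet> y) \<le> y \<bullet> (S *v y)" using ypos by (simp add: field_simps)
    moreover have "y \<bullet> (S *v y) = l + 2*t*(v \<bullet> (S *v u)) + t^2 * (v \<bullet> (S *v v))"
      unfolding y_def l_def using symmetric_matrix_inner_mult[OF sym, of u v]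
      by (simp add: matrix_vector_mult_scaleR matrix_vector_right_distrib algebra_simps
          inner_commute power2_eq_square)
    ultimately show "0 \<le> 2*t*(v \<bullet> (S *v u)) + t^2 * (v \<bullet> (S *v v) - l * (v \<bullet> v))"
      unfolding yy by (simp add: algebra_simps)
  qed
  define r where "r = S *v u - l *\<^sub>R u"
  have rV: "r \<in> V" unfolding r_def using inv[OF uV] uV V(1) by (simp add: subspace_diff subspace_scale)
  have "u \<bullet> r = 0" unfolding r_def l_def using uu by (simp add: algebra_simps)
  hence "r \<bullet> (S *v u) = 0" "r \<bullet> u = 0" using first_order rV by (auto simp: inner_commute)
  hence "r \<bullet> r = 0" unfolding r_def by (simp add: inner_diff_right)
  hence "S *v u = l *\<^sub>R u" unfolding r_def by simp
  thus ?thesis using that uV nu by blast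
qed

lemma symmetric_matrix_orthonormal_eigenbasis_of_invariant_subspace:
  fixes S :: "real^'n^'n"
  assumes sym: "transpose S = S" and "subspace V" and "\<And>x. x \<in> V \<Longrightarrow> S *v x \<in> V"
  shows "\<exists>B. B \<subseteq> V \<and> pairwise orthogonal B \<and> (\<forall>x\<in>B. norm x = 1 \<and> (\<exists>l. S *v x = l *\<^sub>R x))
    \<and> span B = V"
  using assms(2,3)
proof (induction "dim V" arbitrary: V rule: less_induct)
  case (less V)
  show ?case
  proof (cases "V = {0}")
    case True
    thus ?thesis by (intro exI[of _ "{}"]) auto
  next
    case False
    obtain u l where u: "u \<in> V" "norm u = 1" "S *v u = l *\<^sub>R u"
      using symmetric_matrix_eigenvector_in_invariant_subspace[OF sym less.prems(1) False less.prems(2)]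
      by blast
    define V' where "V' = V \<inter> {x. u \<bullet> x = 0}"
    have sV': "subspace V'" unfolding V'_def
      using less.prems(1) by (intro subspace_inter) (auto simp: subspace_def inner_add_right)
    have invV': "S *v x \<in> V'" if "x \<in> V'" for x
    proof -
      have "u \<bullet> (S *v x) = (S *v u) \<bullet> x" using symmetric_matrix_inner_mult[OF sym] by blast
      thus ?thesis using that u(3) less.prems(2) by (auto simp: V'_def)
    qed
    have "u \<notin> V'" using u(2) by (auto simp: V'_def norm_eq_1)
    hence "span V' \<subset> span V"
      unfolding span_eq_iff[THEN iffD2, OF sV'] span_eq_iff[THEN iffD2, OF less.prems(1)]
      using u(1) V'_def by blast
    hence "dim V' < dim V" using dim_psubset by blast
    then obtain B' where B': "B' \<subseteq> V'" "pairwise orthogonal B'"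
      "\<forall>x\<in>B'. norm x = 1 \<and> (\<exists>l. S *v x = l *\<^sub>R x)" "span B' = V'"
      using less.hyps[OF _ sV' invV'] by blast
    have uu: "u \<bullet> u = 1" using u(2) by (simp add: norm_eq_1)
    have "V \<subseteq> span (insert u B')"
    proof
      fix x assume x: "x \<in> V"
      have "x - (u \<bullet> x) *\<^sub>R u \<in> V'"
        using x u(1) less.prems(1) uu by (simp add: V'_def subspace_diff subspace_scale inner_diff_right)
      hence "x - (u \<bullet> x) *\<^sub>R u \<in> span (insert u B')"
        using B'(4) by (metis span_mono subset_insertI subsetD)
      moreover have "(u \<bullet> x) *\<^sub>R u \<in> span (insert u B')" by (simp add: span_base span_mul)
      ultimately show "x \<in> span (insert u B')" by (metis diff_add_cancel span_add)
    qed
    moreover have "span (insert u B') \<subseteq> V"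
      using u(1) B'(1) less.prems(1) by (intro span_minimal) (auto simp: V'_def)
    moreover have "pairwise orthogonal (insert u B')"
      using B'(1,2) by (auto simp: pairwise_insert orthogonal_def V'_def inner_commute)
    ultimately show ?thesis
      using u(1-3) B'(1,3) by (intro exI[of _ "insert u B'"]) (auto simp: V'_def)
  qed
qed

lemma symmetric_matrix_orthogonal_eigenvectors:
  fixes S :: "real^'n^'n"
  assumes sym: "transpose S = S"
  obtains P :: "real^'n^'n" and l :: "'n \<Rightarrow> real"
  where "orthogonal_matrix P" "\<And>j. S *v column j P = l j *\<^sub>R column j P"
proof -
  obtain B where B: "pairwise orthogonal B" "\<forall>x\<in>B. norm x = 1 \<and> (\<exists>l. S *v x = l *\<^sub>R x)"
    "span B = UNIV"
    using symmetric_matrix_orthonormal_eigenbasis_of_invariant_subspace[OF sym, of UNIV] by auto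
  have "0 \<notin> B" using B(2) by force
  hence ind: "independent B" using B(1) pairwise_orthogonal_independent by blast
  hence "card B = CARD('n)"
    using basis_card_eq_dim[of B UNIV] B(3) by (simp add: dim_UNIV)
  moreover have "finite B" using ind finiteI_independent by blast
  ultimately obtain f where f: "bij_betw f (UNIV::'n set) B"
    using finite_same_card_bij[of "UNIV::'n set" B] by auto
  have fB: "f j \<in> B" for j using bij_betwE[OF f] by blast
  have "\<forall>j. \<exists>l. S *v f j = l *\<^sub>R f j" using B(2) fB by blast
  then obtain l where l: "\<And>j. S *v f j = l j *\<^sub>R f j" by metis
  define P where "P = (\<chi> i j. f j $ i)"
  have col: "column j P = f j" for j by (simp add: P_def column_def)
  have "orthogonal (f i) (f j)" if "i \<noteq> j" for i j
  proof -
    have "f i \<noteq> f j" using f that by (auto simp: bij_betw_def inj_on_def)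
    thus ?thesis using B(1) fB unfolding pairwise_def by blast
  qed
  hence "orthogonal_matrix P"
    using B(2) fB by (simp add: orthogonal_matrix_orthonormal_columns col)
  moreover have "S *v column j P = l j *\<^sub>R column j P" for j by (simp add: col l)
  ultimately show ?thesis using that by blast
qed

definition diag_matrix :: "('n \<Rightarrow> real) \<Rightarrow> real^'n^'n" where
  "diag_matrix l = (\<chi> i j. if i = j then l j else 0)"

lemma det_diag_matrix: "det (diag_matrix l) = (\<Prod>j\<in>UNIV. l j)"
  by (subst det_diagonal) (auto simp: diag_matrix_def)

lemma trace_diag_matrix: "trace (diag_matrix l) = (\<Sum>j\<in>UNIV. l j)"
  by (simp add: trace_def diag_matrix_def)

lemma matrix_mult_diag_matrix: "(M ** diag_matrix l) $ i $ j = M $ i $ j * l j"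
  by (simp add: matrix_matrix_mult_def diag_matrix_def if_distrib cong: if_cong)

lemma symmetric_matrix_spectral:
  fixes S :: "real^'n^'n"
  assumes sym: "transpose S = S"
  obtains l :: "'n \<Rightarrow> real"
  where "det S = (\<Prod>j\<in>UNIV. l j)" "trace S = (\<Sum>j\<in>UNIV. l j)" "mat_eigenvalues S = range l"
proof -
  obtain P :: "real^'n^'n" and l where P: "orthogonal_matrix P"
    and eig: "\<And>j. S *v column j P = l j *\<^sub>R column j P"
    using symmetric_matrix_orthogonal_eigenvectors[OF sym] by blast
  have PPt: "P ** transpose P = mat 1" and PtP: "transpose P ** P = mat 1"
    using P by (auto simp: orthogonal_matrix_def)
  have "(S ** P) $ i $ j = (S *v column j P) $ i" for i j
    by (simp add: matrix_matrix_mult_def matrix_vector_mult_def column_def)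
  hence "S ** P = P ** diag_matrix l"
    by (simp add: vec_eq_iff matrix_mult_diag_matrix eig) (simp add: column_def)
  hence S_eq: "S = P ** diag_matrix l ** transpose P"
    by (metis PPt matrix_mul_assoc matrix_mul_rid)
  have "det (transpose P) * det P = 1" using PtP by (metis det_I det_mul)
  hence "det S = (\<Prod>j\<in>UNIV. l j)"
    unfolding S_eq by (simp add: det_mul det_diag_matrix algebra_simps)
  moreover have "trace S = (\<Sum>j\<in>UNIV. l j)"
    unfolding S_eq
    by (metis PtP matrix_mul_assoc matrix_mul_rid trace_diag_matrix trace_mul_sym)
  moreover have "mat_eigenvalues S \<subseteq> range l"
  proof
    fix m assume "m \<in> mat_eigenvalues S"
    then obtain x where x: "x \<noteq> 0" "S *v x = m *\<^sub>R x" by (auto simp: mat_eigenvalues_def)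
    show "m \<in> range l"
    proof (rule ccontr)
      assume m: "m \<notin> range l"
      have "column j P \<bullet> x = 0" for j
      proof -
        have "m * (column j P \<bullet> x) = l j * (column j P \<bullet> x)"
          using symmetric_matrix_inner_mult[OF sym, of "column j P" x] x(2) eig by simp
        moreover have "m \<noteq> l j" using m by auto
        ultimately show ?thesis by simp
      qed
      hence "transpose P *v x = 0"
        by (simp add: vec_eq_iff matrix_vector_mult_def column_def transpose_def inner_vec_def)
      hence "x = 0" by (metis PPt matrix_vector_mul_assoc matrix_vector_mul_lid matrix_vector_mult_0_right)
      with x show False by simp
    qed
  qed
  moreover have "range l \<subseteq> mat_eigenvalues S"
  proof -
    have "column j P \<noteq> 0" for j
      using P by (metis norm_zero orthogonal_matrix_orthonormal_columns zero_neq_one)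
    thus ?thesis using eig by (auto simp: mat_eigenvalues_def)
  qed
  ultimately show ?thesis using that by blast
qed

lemma gram_matrix_symmetric: "transpose (transpose A ** A) = transpose A ** (A::real^'n^'n)"
  by (simp add: matrix_transpose_mul)

lemma gram_matrix_eigenvalue_pos:
  fixes A :: "real^'n^'n"
  assumes "det A \<noteq> 0" "m \<in> mat_eigenvalues (transpose A ** A)"
  shows "m > 0"
proof -
  obtain x where x: "x \<noteq> 0" "(transpose A ** A) *v x = m *\<^sub>R x"
    using assms(2) by (auto simp: mat_eigenvalues_def)
  have "A *v x \<noteq> 0"
    using x(1) assms(1)
    by (metis invertible_det_nz invertible_left_inverse matrix_vector_mul_assoc matrix_vector_mul_lid
        matrix_vector_mult_0_right)
  moreover have "m * (x \<bullet> x) = (A *v x) \<bullet> (A *v x)"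
    using x(2) by (metis dot_lmul_matrix inner_scaleR_right matrix_vector_mul_assoc vector_transpose_matrix)
  ultimately have "m * (x \<bullet> x) > 0" by simp
  thus ?thesis using x(1) by (metis inner_gt_zero_iff zero_less_mult_pos2)
qed

lemma prod_le_one_if_sum_eq_card:
  fixes l :: "'n::finite \<Rightarrow> real"
  assumes pos: "\<And>j. l j > 0" and sum: "(\<Sum>j\<in>UNIV. l j) = real CARD('n)"
  shows "(\<Prod>j\<in>UNIV. l j) \<le> 1"
proof -
  have "ln (\<Prod>j\<in>UNIV. l j) = (\<Sum>j\<in>UNIV. ln (l j))"
    using pos by (intro ln_prod) (simp_all add: dual_order.strict_implies_not_eq)
  also have "\<dots> \<le> (\<Sum>j\<in>UNIV. l j - 1)" using pos by (intro sum_mono ln_le_minus_one) auto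
  also have "\<dots> = 0" using sum by (simp add: sum_subtractf)
  finally show ?thesis using pos by (simp add: prod_pos)
qed

text \<open>After scaling the columns of \<open>M\<close> to unit length, the Gram matrix has trace \<open>n\<close>, so
  by AM-GM its determinant (the product of its positive eigenvalues) is at most \<open>1\<close>.\<close>

lemma hadamard_inequality:
  fixes M :: "real^'n^'n"
  shows "\<bar>det M\<bar> \<le> (\<Prod>j\<in>UNIV. norm (column j M))"
proof (cases "det M = 0")
  case True
  thus ?thesis by (simp add: prod_nonneg)
next
  case False
  define d where "d j = norm (column j M)" for j
  have dpos: "d j > 0" for j
    using False det_zero_column(1)[of j M] by (auto simp: d_def)
  define N where "N = M ** diag_matrix (\<lambda>j. inverse (d j))"
  have "column j N = inverse (d j) *\<^sub>R column j M" for j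
    by (simp add: N_def vec_eq_iff column_def matrix_mult_diag_matrix)
  hence ncol: "norm (column j N) = 1" for j
    using dpos[of j] by (simp add: d_def)
  have pd: "(\<Prod>j\<in>UNIV. d j) > 0" using dpos by (simp add: prod_pos)
  have detN: "det N = det M / (\<Prod>j\<in>UNIV. d j)"
    by (simp add: N_def det_mul det_diag_matrix prod_inversef[of d, unfolded comp_def] divide_inverse)
  define H where "H = transpose N ** N"
  obtain l :: "'n \<Rightarrow> real" where l: "det H = (\<Prod>j\<in>UNIV. l j)" "trace H = (\<Sum>j\<in>UNIV. l j)"
    "mat_eigenvalues H = range l"
    using symmetric_matrix_spectral[OF gram_matrix_symmetric] unfolding H_def by metis
  have "det N \<noteq> 0" using False pd by (simp add: detN less_imp_neq[symmetric])
  hence lpos: "l j > 0" for j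
    using gram_matrix_eigenvalue_pos[of N "l j"] l(3) by (simp add: H_def)
  have "H $ j $ j = 1" for j
    using ncol[of j] by (simp add: H_def matrix_mult_transpose_dot_column norm_eq_1)
  hence "trace H = real CARD('n)" by (simp add: trace_def)
  hence "(\<Prod>j\<in>UNIV. l j) \<le> 1" using prod_le_one_if_sum_eq_card[of l] lpos l(2) by simp
  hence "(det N)^2 \<le> 1" using l(1) by (simp add: H_def det_mul power2_eq_square)
  hence "\<bar>det M\<bar> / (\<Prod>j\<in>UNIV. d j) \<le> 1" using pd by (simp add: detN abs_square_le_1)
  thus ?thesis using pd by (simp add: d_def[symmetric] field_simps)
qed

lemma prod_remove_mult_Min_le_prod:
  fixes f :: "'n::finite \<Rightarrow> real"
  assumes "\<And>j. f j \<ge> 0"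
  shows "(\<Prod>j\<in>UNIV - {k}. f j) * Min (range f) \<le> (\<Prod>j\<in>UNIV. f j)"
proof -
  have "Min (range f) \<le> f k" by simp
  hence "(\<Prod>j\<in>UNIV - {k}. f j) * Min (range f) \<le> (\<Prod>j\<in>UNIV - {k}. f j) * f k"
    using assms by (intro mult_left_mono prod_nonneg) auto
  thus ?thesis by (simp add: prod.remove mult.commute)
qed

text \<open>Cramer's rule combined with Hadamard's inequality.\<close>

lemma solution_component_lower_bound:
  fixes M :: "real^'n^'n"
  assumes "det M > 0" "M *v x = y"
  defines "c \<equiv> \<lambda>j. norm (column j M)"
  shows "- ((\<Prod>j\<in>UNIV. c j) * norm y / (Min (range c) * det M)) \<le> x $ k"
proof -
  define Mk where "Mk = (\<chi> i j. if j = k then y $ i else M $ i $ j)"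
  have "Min (range c) > 0"
    using assms(1) det_zero_column(1)[of _ M] by (auto simp: c_def)
  have "column j Mk = (if j = k then y else column j M)" for j
    by (simp add: Mk_def column_def vec_eq_iff)
  hence "(\<Prod>j\<in>UNIV. norm (column j Mk)) = norm y * (\<Prod>j\<in>UNIV - {k}. c j)"
    by (subst prod.remove[of _ k]) (auto simp: c_def intro!: prod.cong)
  moreover have "det Mk = x $ k * det M"
    using cramer_lemma[of k M x] unfolding assms(2) Mk_def .
  ultimately have "\<bar>x $ k\<bar> * det M \<le> norm y * (\<Prod>j\<in>UNIV - {k}. c j)"
    using hadamard_inequality[of Mk] assms(1) by (simp add: abs_mult)
  also have "\<dots> \<le> norm y * ((\<Prod>j\<in>UNIV. c j) / Min (range c))"
    using prod_remove_mult_Min_le_prod[of c k] \<open>Min (range c) > 0\<close>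
    by (intro mult_left_mono) (auto simp: c_def field_simps)
  finally have "\<bar>x $ k\<bar> \<le> (\<Prod>j\<in>UNIV. c j) * norm y / (Min (range c) * det M)"
    using assms(1) \<open>Min (range c) > 0\<close> by (simp add: field_simps)
  thus ?thesis by linarith
qed

lemma gram_matrix_min_eigenvalue:
  fixes A :: "real^'n^'n"
  assumes "det A \<noteq> 0"
  shows "min_eigenvalue (transpose A ** A) > 0"
    and "min_eigenvalue (transpose A ** A) ^ CARD('n) \<le> det (transpose A ** A)"
proof -
  obtain l :: "'n \<Rightarrow> real"
    where l: "det (transpose A ** A) = (\<Prod>j\<in>UNIV. l j)" "mat_eigenvalues (transpose A ** A) = range l"
    using symmetric_matrix_spectral[OF gram_matrix_symmetric] by metis
  have lmin: "min_eigenvalue (transpose A ** A) = Min (range l)"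
    by (simp add: min_eigenvalue_def l(2))
  have "Min (range l) \<in> range l" by simp
  thus pos: "min_eigenvalue (transpose A ** A) > 0"
    using gram_matrix_eigenvalue_pos[OF assms] l(2) lmin by auto
  have "0 < Min (range l)" using pos lmin by simp
  hence "(\<Prod>j\<in>(UNIV::'n set). Min (range l)) \<le> (\<Prod>j\<in>UNIV. l j)"
    by (intro prod_mono conjI) (auto intro: less_imp_le)
  thus "min_eigenvalue (transpose A ** A) ^ CARD('n) \<le> det (transpose A ** A)"
    by (simp add: lmin l(1))
qed

lemma invertible_matrix_vector_eq_iff:
  fixes A :: "real^'n^'n"
  assumes "invertible A"
  shows "A *v x = b \<longleftrightarrow> x = matrix_inv A *v b"
proof -
  have "A ** matrix_inv A = mat 1 \<and> matrix_inv A ** A = mat 1"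
    using assms unfolding invertible_def matrix_inv_def by (rule someI_ex)
  thus ?thesis by (metis matrix_vector_mul_assoc matrix_vector_mul_lid)
qed

lemma t_star_le:
  fixes A :: "real^'n^'n"
  assumes "invertible A" and "\<And>i. - t \<le> (matrix_inv A *v b) $ i"
  shows "t_star A b \<le> t"
  unfolding t_star_def
proof (rule cInf_lower)
  let ?xs = "matrix_inv A *v b"
  have sol: "A *v (x - s *\<^sub>R 1) = b \<longleftrightarrow> x = ?xs + s *\<^sub>R 1" for x and s :: real
    by (auto simp: invertible_matrix_vector_eq_iff[OF assms(1)] diff_eq_eq)
  have "0 \<le> (?xs + t *\<^sub>R 1) $ i" for i using assms(2)[of i] by simp
  thus "t \<in> {t. \<exists>x. (\<forall>i. 0 \<le> x $ i) \<and> A *v (x - t *\<^sub>R 1) = b}"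
    by (auto simp: sol)
  show "bdd_below {t. \<exists>x. (\<forall>i. 0 \<le> x $ i) \<and> A *v (x - t *\<^sub>R 1) = b}"
  proof (rule bdd_belowI)
    fix s assume "s \<in> {t. \<exists>x. (\<forall>i. 0 \<le> x $ i) \<and> A *v (x - t *\<^sub>R 1) = b}"
    hence "0 \<le> (?xs + s *\<^sub>R 1) $ undefined" by (auto simp: sol)
    thus "- ?xs $ undefined \<le> s" by simp
  qed
qed

theorem theorem7:
  fixes A :: "real^'n^'n" and b :: "real^'n"
  assumes "invertible A"
  defines "xs \<equiv> matrix_inv A *v b"
      and "Q \<equiv> transpose A ** A"
      and "w \<equiv> transpose A *v b"
  defines "qmin \<equiv> Min ((\<lambda>j. norm (column j Q)) ` UNIV)"
      and "lmin \<equiv> min_eigenvalue Q"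
  defines "tau \<equiv> (\<Prod>j\<in>UNIV. norm (column j Q)) * norm w / (qmin * lmin ^ CARD('n))"
      and "tau' \<equiv> (\<Prod>j\<in>UNIV. norm (column j Q)) * norm w / (qmin * det Q)"
  shows "(\<forall>i. xs $ i \<ge> - tau' \<and> - tau' \<ge> - tau) \<and> tau \<ge> tau' \<and> tau' \<ge> t_star A b"
proof -
  have detA: "det A \<noteq> 0" using assms(1) invertible_det_nz by blast
  have detQ: "det Q > 0" using detA by (metis Q_def det_mul det_transpose not_real_square_gt_zero)
  have "A *v xs = b" using invertible_matrix_vector_eq_iff[OF assms(1)] by (simp add: xs_def)
  hence "Q *v xs = w" unfolding Q_def w_def by (metis matrix_vector_mul_assoc)
  hence xs_bound: "- tau' \<le> xs $ i" for i
    using solution_component_lower_bound[OF detQ] by (simp add: tau'_def qmin_def)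
  have "qmin > 0"
    using detQ det_zero_column(1)[of _ Q] by (auto simp: qmin_def)
  moreover have "0 < lmin" "lmin ^ CARD('n) \<le> det Q"
    using gram_matrix_min_eigenvalue[OF detA] by (auto simp: lmin_def Q_def)
  ultimately have "tau' \<le> tau"
    unfolding tau_def tau'_def
    using detQ by (intro divide_left_mono mult_left_mono mult_nonneg_nonneg prod_nonneg) auto
  moreover have "t_star A b \<le> tau'"
    using t_star_le[OF assms(1)] xs_bound by (simp add: xs_def)
  ultimately show ?thesis using xs_bound by simp
qed

end
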